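(* Let $K\ge2$, $n\ge1$, $\alpha\in(0,1)$, and let $\mathcal L_X$ be a continuous (atomless) distribution on a space $\mathcal X$. Let $C$ be a measurable function of data $(X_1,Y_1),\dots,(X_n,Y_n)\in(\mathcal X\times\{1,\dots,K\})^n$ with the following property: for every joint distribution $\mathcal L$ of $(X,Y)$ whose $X$-marginal is $\mathcal L_X$ and whose $Y$-marginal is $\mathrm{Unif}(\{1,\dots,K\})$, if $(X_i,Y_i)_{i=1}^n$ are i.i.d. from $\mathcal L$ then $\mathbb P_{\mathcal L}\big(C(X_{1:n},Y_{1:n})\ge\mathrm{ETV}(X,Y)\big)\ge1-\alpha$. Then, when $(X_i,Y_i)\stackrel{\text{i.i.d.}}{\sim}\mathcal L_X\times\mathrm{Unif}(\{1,\dots,K\})$ (so that $X$ and $Y$ are independent), $$\mathbb P\big(C(X_{1:n},Y_{1:n})\ge1\big)\ge1-\alpha.$$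
   Context: For $(X,Y)\sim\mathcal L$ with $Y\in\{1,\dots,K\}$, $\mathrm{ETV}(X,Y)=\frac{1}{1-1/K}\,\mathbb E_{\mathcal L}\big[\mathrm{TV}(\mathcal L(Y\mid X),\mathcal L(Y))\big]$, where $\mathrm{TV}$ is total variation distance (half the $L_1$ distance). This quantity always lies in $[0,1]$, and $1$ is its theoretical upper bound. *)

theory Defs
  imports "HOL-Probability.Probability"
begin

definition atomless :: "'a measure \<Rightarrow> bool" where
  "atomless M \<longleftrightarrow> (\<forall>A\<in>sets M. emeasure M A > 0 \<longrightarrow>
      (\<exists>B\<in>sets M. B \<subseteq> A \<and> 0 < emeasure M B \<and> emeasure M B < emeasure M A))"

definition obs_space :: "'x measure \<Rightarrow> nat \<Rightarrow> ('x \<times> nat) measure" where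
  "obs_space MX K = MX \<Otimes>\<^sub>M count_space {1..K}"

text \<open>Conditional probability P(Y = k | X), as a function on the sample space,
  via conditional expectation w.r.t. the sigma-algebra generated by X = fst.\<close>
definition cond_prob_Y :: "'x measure \<Rightarrow> ('x \<times> nat) measure \<Rightarrow> nat \<Rightarrow> ('x \<times> nat) \<Rightarrow> real" where
  "cond_prob_Y MX L k = real_cond_exp L (vimage_algebra (space L) fst MX)
      (\<lambda>z. if snd z = k then 1 else 0)"

definition ETV :: "'x measure \<Rightarrow> nat \<Rightarrow> ('x \<times> nat) measure \<Rightarrow> real" where
  "ETV MX K L = (1 / (1 - 1 / real K)) *
     (\<integral>z. (1/2) * (\<Sum>k\<in>{1..K}. \<bar>cond_prob_Y MX L k z
              - measure L {w \<in> space L. snd w = k}\<bar>) \<partial>L)"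

end

(* An atomless X-space can be cut into m blocks of K cells of equal mass. Each labelling
   s : blocks -> Z/K shifts the cyclic labels of the cells of a block, and gives a law of (X, Y)
   with X-marginal LX, uniform Y and Y a function of X, hence ETV = 1; by validity, C >= 1 with
   probability at least 1 - alpha under it. If the n sample points fall into distinct blocks,
   their labels under a uniformly random s are i.i.d. uniform, so the independent law is the
   average of the deterministic ones up to the probability n^2/m of a block collision.
   Letting m tend to infinity gives the claim. *)

theory Submission
  imports Defs
begin

lemma atomless_exists_half_subset:
  assumes "prob_space M" and "atomless M" and A: "A \<in> sets M" and pos: "measure M A > 0"
  shows "\<exists>B\<in>sets M. B \<subseteq> A \<and> 0 < measure M B \<and> 2 * measure M B \<le> measure M A"
proof -
  interpret prob_space M by fact
  have "emeasure M A > 0" using pos by (simp add: emeasure_eq_measure)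
  then obtain B where B: "B \<in> sets M" "B \<subseteq> A" "0 < emeasure M B" "emeasure M B < emeasure M A"
    using \<open>atomless M\<close> A unfolding atomless_def by blast
  have mB: "0 < measure M B" "measure M B < measure M A"
    using B by (simp_all add: emeasure_eq_measure ennreal_less_iff)
  have "measure M (A - B) = measure M A - measure M B"
    using A B by (simp add: finite_measure_Diff)
  then show ?thesis
  proof (cases "2 * measure M B \<le> measure M A")
    case False
    then show ?thesis using A B mB \<open>measure M (A - B) = _\<close> by (intro bexI[of _ "A - B"]) auto
  qed (use B mB in blast)
qed

lemma atomless_exists_small_subset:
  assumes P: "prob_space M" and at: "atomless M" and A: "A \<in> sets M" and pos: "measure M A > 0"
    and e: "e > 0"
  shows "\<exists>B\<in>sets M. B \<subseteq> A \<and> 0 < measure M B \<and> measure M B \<le> e"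
proof -
  interpret prob_space M by fact
  have halved: "\<exists>B\<in>sets M. B \<subseteq> A \<and> 0 < measure M B \<and> 2 ^ k * measure M B \<le> measure M A" for k
  proof (induction k)
    case 0
    show ?case using A pos by auto
  next
    case (Suc k)
    then obtain B where B: "B \<in> sets M" "B \<subseteq> A" "0 < measure M B" "2 ^ k * measure M B \<le> measure M A"
      by blast
    obtain B' where B': "B' \<in> sets M" "B' \<subseteq> B" "0 < measure M B'" "2 * measure M B' \<le> measure M B"
      using atomless_exists_half_subset[OF P at B(1,3)] by blast
    have "2 ^ Suc k * measure M B' \<le> 2 ^ k * measure M B"
      using B'(4) by simp
    then have "2 ^ Suc k * measure M B' \<le> measure M A"
      using B(4) by linarith
    then show ?case using B B' by (intro bexI[of _ B']) auto
  qed
  obtain k where k: "1 / e < 2 ^ k" using real_arch_pow[of 2 "1 / e"] by auto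
  obtain B where B: "B \<in> sets M" "B \<subseteq> A" "0 < measure M B" "2 ^ k * measure M B \<le> measure M A"
    using halved by blast
  have "1 / e * measure M B \<le> 2 ^ k * measure M B"
    using k B(3) by (intro mult_right_mono) auto
  also have "\<dots> \<le> 1" using B(4) prob_le_1[of A] by linarith
  finally have "measure M B \<le> e" using e by (simp add: field_simps)
  then show ?thesis using B by blast
qed

text \<open>Greedy exhaustion: keep adding a set of at least half the largest admissible measure.
  The increments tend to zero, so nothing of positive measure can be added to the union.\<close>
lemma finite_measure_exists_maximal_subset_le:
  assumes "finite_measure M" and A: "A \<in> sets M" and t: "0 \<le> t"
  shows "\<exists>B\<in>sets M. B \<subseteq> A \<and> measure M B \<le> t \<and>
    (\<forall>E\<in>sets M. E \<subseteq> A - B \<longrightarrow> measure M B + measure M E \<le> t \<longrightarrow> measure M E = 0)"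
proof -
  interpret finite_measure M by fact
  define admissible where
    "admissible B E \<longleftrightarrow> E \<in> sets M \<and> E \<subseteq> A - B \<and> measure M B + measure M E \<le> t" for B E
  define \<delta> where "\<delta> B = Sup {measure M E | E. admissible B E}" for B
  define next_set where "next_set B = (SOME E. admissible B E \<and> \<delta> B / 2 \<le> measure M E)" for B
  have bdd: "bdd_above {measure M E | E. admissible B E}" for B
    by (rule bdd_aboveI[of _ "measure M (space M)"]) (auto simp: admissible_def bounded_measure)
  have next_set: "admissible B (next_set B) \<and> \<delta> B / 2 \<le> measure M (next_set B)"
    if "measure M B \<le> t" for B
  proof -
    have ne: "{measure M E | E. admissible B E} \<noteq> {}"
      using that unfolding admissible_def by (auto intro!: exI[of _ "{}"])
    have "\<exists>E. admissible B E \<and> \<delta> B / 2 \<le> measure M E"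
    proof (cases "\<delta> B > 0")
      case True
      then have "\<delta> B / 2 < Sup {measure M E | E. admissible B E}" unfolding \<delta>_def by simp
      then show ?thesis using less_cSup_iff[OF ne bdd] by force
    next
      case False
      then show ?thesis using that unfolding admissible_def by (intro exI[of _ "{}"]) auto
    qed
    then show ?thesis unfolding next_set_def by (rule someI_ex)
  qed
  define Bs where "Bs k = ((\<lambda>B. B \<union> next_set B) ^^ k) {}" for k
  have Bs_Suc: "Bs (Suc k) = Bs k \<union> next_set (Bs k)" for k
    by (simp add: Bs_def)
  have step: "measure M (Bs (Suc k)) = measure M (Bs k) + measure M (next_set (Bs k))"
    if "Bs k \<in> sets M" "admissible (Bs k) (next_set (Bs k))" for k
    using that unfolding Bs_Suc admissible_def by (intro finite_measure_Union) auto
  have Bs: "Bs k \<in> sets M \<and> Bs k \<subseteq> A \<and> measure M (Bs k) \<le> t" for k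
  proof (induction k)
    case 0
    show ?case using t by (simp add: Bs_def)
  next
    case (Suc k)
    then have "admissible (Bs k) (next_set (Bs k))" using next_set by blast
    with Suc show ?case using step[of k] unfolding Bs_Suc admissible_def by auto
  qed
  have increment: "\<delta> (Bs k) / 2 \<le> measure M (Bs (Suc k)) - measure M (Bs k)" for k
    using next_set[of "Bs k"] Bs[of k] step[of k] by auto
  define B where "B = (\<Union>k. Bs k)"
  have B: "B \<in> sets M" "B \<subseteq> A" using Bs unfolding B_def by auto
  have lim: "(\<lambda>k. measure M (Bs k)) \<longlonglongrightarrow> measure M B"
    unfolding B_def using Bs by (intro finite_Lim_measure_incseq) (auto simp: incseq_Suc_iff Bs_Suc)
  have "measure M B \<le> t"
    using Bs by (intro LIMSEQ_le_const2[OF lim]) auto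
  moreover have "measure M E = 0"
    if E: "E \<in> sets M" "E \<subseteq> A - B" "measure M B + measure M E \<le> t" for E
  proof -
    have "measure M E \<le> \<delta> (Bs k)" for k
    proof -
      have "measure M (Bs k) \<le> measure M B"
        unfolding B_def using Bs by (intro finite_measure_mono) auto
      then have "admissible (Bs k) E" unfolding admissible_def using E unfolding B_def by auto
      then show ?thesis unfolding \<delta>_def by (intro cSup_upper bdd) auto
    qed
    then have "measure M E / 2 \<le> measure M (Bs (Suc k)) - measure M (Bs k)" for k
      using increment[of k] by (meson divide_right_mono order_trans zero_le_numeral)
    moreover have "(\<lambda>k. measure M (Bs (Suc k)) - measure M (Bs k)) \<longlonglongrightarrow> 0"
      using tendsto_diff[OF LIMSEQ_Suc[OF lim] lim] by simp
    ultimately have "measure M E / 2 \<le> 0"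
      by (intro LIMSEQ_le_const) auto
    then show ?thesis using measure_nonneg[of M E] by linarith
  qed
  ultimately show ?thesis using B by blast
qed

lemma atomless_exists_subset_measure:
  assumes P: "prob_space M" and at: "atomless M" and A: "A \<in> sets M"
    and t: "0 \<le> t" "t \<le> measure M A"
  shows "\<exists>B\<in>sets M. B \<subseteq> A \<and> measure M B = t"
proof -
  interpret prob_space M by fact
  obtain B where B: "B \<in> sets M" "B \<subseteq> A" "measure M B \<le> t"
    and maximal: "\<And>E. E \<in> sets M \<Longrightarrow> E \<subseteq> A - B \<Longrightarrow> measure M B + measure M E \<le> t \<Longrightarrow> measure M E = 0"
    using finite_measure_exists_maximal_subset_le[OF finite_measure_axioms A t(1)] by blast
  have "\<not> measure M B < t"
  proof
    assume lt: "measure M B < t"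
    have "measure M (A - B) = measure M A - measure M B" using A B by (simp add: finite_measure_Diff)
    then have "measure M (A - B) > 0" using lt t by simp
    then obtain E where "E \<in> sets M" "E \<subseteq> A - B" "0 < measure M E" "measure M E \<le> t - measure M B"
      using atomless_exists_small_subset[OF P at _ _, of "A - B" "t - measure M B"] A B lt by auto
    then show False using maximal[of E] by simp
  qed
  then have "measure M B = t" using B(3) by linarith
  then show ?thesis using B by blast
qed

lemma atomless_exists_uniform_partition_on:
  fixes c :: real
  assumes P: "prob_space M" and at: "atomless M" and T: "finite T" "T \<noteq> {}"
    and A: "A \<in> sets M" "measure M A = card T * c"
  shows "\<exists>h. (\<forall>x\<in>A. h x \<in> T) \<and>
    (\<forall>t\<in>T. {x\<in>A. h x = t} \<in> sets M \<and> measure M {x\<in>A. h x = t} = c)"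
  using T A
proof (induction T arbitrary: A rule: finite_ne_induct)
  case (singleton t)
  then show ?case by (intro exI[of _ "\<lambda>_. t"]) auto
next
  case (insert t T)
  interpret prob_space M by fact
  have c: "0 \<le> c" "c \<le> measure M A"
    using insert.prems measure_nonneg[of M A] insert.hyps
    by (auto simp: zero_le_mult_iff intro!: mult_le_cancel_right1[THEN iffD2])
  obtain B where B: "B \<in> sets M" "B \<subseteq> A" "measure M B = c"
    using atomless_exists_subset_measure[OF P at insert.prems(1) c] by blast
  have "measure M (A - B) = card T * c"
    using insert.prems insert.hyps B by (simp add: finite_measure_Diff algebra_simps)
  then obtain h where h: "\<forall>x\<in>A - B. h x \<in> T"
      "\<forall>t\<in>T. {x\<in>A - B. h x = t} \<in> sets M \<and> measure M {x\<in>A - B. h x = t} = c"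
    using insert.IH[of "A - B"] insert.prems B by blast
  define h' where "h' x = (if x \<in> B then t else h x)" for x
  have h'_t: "{x\<in>A. h' x = t} = B" using B h insert.hyps unfolding h'_def by auto
  have h'_u: "{x\<in>A. h' x = u} = {x\<in>A - B. h x = u}" if "u \<in> T" for u
    using that insert.hyps unfolding h'_def by auto
  show ?case
  proof (intro exI[of _ h'] conjI ballI)
    show "h' x \<in> insert t T" if "x \<in> A" for x using h that by (auto simp: h'_def)
    show "{x\<in>A. h' x = u} \<in> sets M" "measure M {x\<in>A. h' x = u} = c" if "u \<in> insert t T" for u
      using that h'_t h'_u B h by auto
  qed
qed

lemma atomless_exists_uniform_map:
  assumes P: "prob_space M" and at: "atomless M" and T: "finite T" "T \<noteq> {}"
  obtains h where "h \<in> measurable M (count_space T)"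
    and "distr M (count_space T) h = uniform_count_measure T"
proof -
  interpret prob_space M by fact
  have "card T > 0" using T by (simp add: card_gt_0_iff)
  obtain h where h: "\<forall>x\<in>space M. h x \<in> T"
      "\<forall>t\<in>T. {x\<in>space M. h x = t} \<in> sets M \<and> measure M {x\<in>space M. h x = t} = 1 / card T"
    using atomless_exists_uniform_partition_on[OF P at T, of "space M" "1 / real (card T)"] T
    by (auto simp: prob_space)
  have fibre: "h -` {t} \<inter> space M = {x\<in>space M. h x = t}" for t by auto
  have h_meas: "h \<in> measurable M (count_space T)"
    using h T by (subst measurable_count_space_eq_countable) (auto intro: countable_finite simp: fibre)
  have "distr M (count_space T) h = uniform_count_measure T"
  proof (rule measure_eqI)
    fix A assume "A \<in> sets (distr M (count_space T) h)"
    then have A: "A \<subseteq> T" by simp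
    have "h -` A \<inter> space M = (\<Union>t\<in>A. {x\<in>space M. h x = t})" by auto
    then have "measure M (h -` A \<inter> space M) = (\<Sum>t\<in>A. measure M {x\<in>space M. h x = t})"
      using A T h by (simp only:) (intro finite_measure_finite_Union; auto simp: disjoint_family_on_def finite_subset)
    also have "\<dots> = card A / card T" using A h by (simp add: subset_iff)
    finally show "emeasure (distr M (count_space T) h) A = emeasure (uniform_count_measure T) A"
      using A T h_meas
      by (simp add: emeasure_distr emeasure_eq_measure emeasure_uniform_count_measure divide_ennreal
          ennreal_of_nat_eq_real_of_nat)
  qed (simp add: sets_uniform_count_measure)
  with h_meas show ?thesis by (rule that)
qed

lemma card_filter_uniform_fibres:
  assumes S: "finite S" and Z: "finite Z" and f: "f ` S \<subseteq> Z"
    and fibres: "\<And>z. z \<in> Z \<Longrightarrow> card {s\<in>S. f s = z} * card Z = card S"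
  shows "card {s\<in>S. P (f s)} * card Z = card {z\<in>Z. P z} * card S"
proof -
  have "card {s\<in>S. P (f s)} = card (\<Union>z\<in>{z\<in>Z. P z}. {s\<in>S. f s = z})"
    using f by (intro arg_cong[where f = card]) auto
  also have "\<dots> = (\<Sum>z\<in>{z\<in>Z. P z}. card {s\<in>S. f s = z})"
    using S Z by (intro card_UN_disjoint) auto
  finally have "card {s\<in>S. P (f s)} * card Z = (\<Sum>z\<in>{z\<in>Z. P z}. card {s\<in>S. f s = z} * card Z)"
    by (simp add: sum_distrib_right)
  also have "\<dots> = card {z\<in>Z. P z} * card S" using fibres by simp
  finally show ?thesis .
qed

lemma distr_uniform_count_measure_uniform_fibres:
  assumes T: "finite T" "T \<noteq> {}" and Y: "finite Y" and f: "f ` T \<subseteq> Y"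
    and fibres: "\<And>y. y \<in> Y \<Longrightarrow> card {t\<in>T. f t = y} * card Y = card T"
  shows "distr (uniform_count_measure T) (count_space Y) f = uniform_count_measure Y"
proof (rule measure_eqI)
  have "card T > 0" "card Y > 0" using T Y f by (auto simp: card_gt_0_iff)
  have f_meas: "f \<in> measurable (uniform_count_measure T) (count_space Y)"
    using f Y by (auto simp: measurable_count_space_eq1 space_uniform_count_measure
        cong: measurable_cong_sets[OF sets_uniform_count_measure_count_space refl])
  fix A assume "A \<in> sets (distr (uniform_count_measure T) (count_space Y) f)"
  then have A: "A \<subseteq> Y" by simp
  have "f -` A \<inter> space (uniform_count_measure T) = {t\<in>T. f t \<in> A}"
    by (auto simp: space_uniform_count_measure)
  moreover have "card {t\<in>T. f t \<in> A} * card Y = card A * card T"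
    using card_filter_uniform_fibres[OF T(1) Y f fibres, of "\<lambda>y. y \<in> A"] A
    by (simp add: Int_absorb1[OF A, unfolded Int_def])
  then have "real (card {t\<in>T. f t \<in> A}) / card T = card A / card Y"
    using \<open>card T > 0\<close> \<open>card Y > 0\<close> by (simp add: field_simps flip: of_nat_mult)
  ultimately show "emeasure (distr (uniform_count_measure T) (count_space Y) f) A =
      emeasure (uniform_count_measure Y) A"
    using A T Y f_meas
    by (simp add: emeasure_distr emeasure_uniform_count_measure divide_ennreal ennreal_of_nat_eq_real_of_nat)
qed (simp add: sets_uniform_count_measure)

lemma distr_uniform_count_measure_fst:
  assumes "finite A" "A \<noteq> {}" "finite B" "B \<noteq> {}"
  shows "distr (uniform_count_measure (A \<times> B)) (count_space A) fst = uniform_count_measure A"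
proof (rule distr_uniform_count_measure_uniform_fibres)
  fix a assume "a \<in> A"
  then have "{p \<in> A \<times> B. fst p = a} = {a} \<times> B" by auto
  then show "card {p \<in> A \<times> B. fst p = a} * card A = card (A \<times> B)"
    by (simp add: card_cartesian_product)
qed (use assms in auto)

lemma card_PiE_prescribed_on_image:
  assumes J: "finite J" and inj: "inj_on \<beta> I" and \<beta>: "\<beta> ` I \<subseteq> J" and t: "\<And>i. i \<in> I \<Longrightarrow> t i \<in> Z"
  shows "card {s \<in> Pi\<^sub>E J (\<lambda>_. Z). \<forall>i\<in>I. s (\<beta> i) = t i} = card Z ^ (card J - card I)"
proof -
  define B where "B j = (if j \<in> \<beta> ` I then {t (the_inv_into I \<beta> j)} else Z)" for j
  have B_image: "B (\<beta> i) = {t i}" if "i \<in> I" for i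
    using that inj by (simp add: B_def the_inv_into_f_f)
  have "{s \<in> Pi\<^sub>E J (\<lambda>_. Z). \<forall>i\<in>I. s (\<beta> i) = t i} = Pi\<^sub>E J B"
  proof (intro equalityI subsetI)
    fix s assume "s \<in> {s \<in> Pi\<^sub>E J (\<lambda>_. Z). \<forall>i\<in>I. s (\<beta> i) = t i}"
    then show "s \<in> Pi\<^sub>E J B" by (auto simp: PiE_iff B_def inj the_inv_into_f_f)
  next
    fix s assume s: "s \<in> Pi\<^sub>E J B"
    then have "s (\<beta> i) = t i" if "i \<in> I" for i
      using that \<beta> B_image by (auto simp: PiE_iff)
    moreover have "s j \<in> Z" if "j \<in> J" for j
    proof (cases "j \<in> \<beta> ` I")
      case True
      then obtain i where "i \<in> I" "j = \<beta> i" by blast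
      then show ?thesis using s that t B_image by (auto simp: PiE_iff)
    next
      case False
      then show ?thesis using s that by (auto simp: PiE_iff B_def)
    qed
    ultimately show "s \<in> {s \<in> Pi\<^sub>E J (\<lambda>_. Z). \<forall>i\<in>I. s (\<beta> i) = t i}"
      using s by (auto simp: PiE_iff)
  qed
  also have "card (Pi\<^sub>E J B) = (\<Prod>j\<in>J. if j \<in> \<beta> ` I then 1 else card Z)"
    using J by (subst card_PiE) (auto intro!: prod.cong simp: B_def)
  also have "\<dots> = card Z ^ card (J - \<beta> ` I)"
    using J by (simp add: prod.If_cases Diff_eq)
  also have "card (J - \<beta> ` I) = card J - card I"
    using J \<beta> inj by (simp add: card_Diff_subset finite_subset card_image)
  finally show ?thesis .
qed

definition cyclic_label :: "nat \<Rightarrow> nat \<Rightarrow> nat \<Rightarrow> nat" where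
  "cyclic_label K c t = (c + t) mod K + 1"

lemma cyclic_label_commute: "cyclic_label K c t = cyclic_label K t c"
  unfolding cyclic_label_def by (simp add: add.commute)

lemma cyclic_label_range: "0 < K \<Longrightarrow> cyclic_label K c t \<in> {1..K}"
  unfolding cyclic_label_def by (simp add: Suc_leI)

lemma cyclic_label_eq_iff:
  assumes c: "c < K" and t: "t < K" and y: "y \<in> {1..K}"
  shows "cyclic_label K c t = y \<longleftrightarrow> t = (y + K - Suc c) mod K"
proof -
  have "y - 1 < K" using y by auto
  have "y + K - Suc c = (y - 1) + (K - c)" using c y by simp
  moreover have "(c + t) mod K = y - 1 \<longleftrightarrow> t = ((y - 1) + (K - c)) mod K"
  proof
    assume "(c + t) mod K = y - 1"
    then have "((y - 1) + (K - c)) mod K = ((c + t) + (K - c)) mod K" by (metis mod_add_left_eq)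
    also have "(c + t) + (K - c) = t + K" using c by simp
    finally show "t = ((y - 1) + (K - c)) mod K" using t by simp
  next
    assume "t = ((y - 1) + (K - c)) mod K"
    then have "(c + t) mod K = (c + ((y - 1) + (K - c))) mod K" by (simp add: mod_add_right_eq)
    also have "c + ((y - 1) + (K - c)) = (y - 1) + K" using c by simp
    finally show "(c + t) mod K = y - 1" using \<open>y - 1 < K\<close> by simp
  qed
  ultimately show ?thesis using y unfolding cyclic_label_def by auto
qed

lemma distr_uniform_count_measure_cyclic_label:
  assumes J: "finite J" "J \<noteq> {}" and K: "0 < K" and s: "\<And>j. j \<in> J \<Longrightarrow> s j < K"
  shows "distr (uniform_count_measure (J \<times> {..<K})) (count_space {1..K})
      (\<lambda>p. cyclic_label K (snd p) (s (fst p))) = uniform_count_measure {1..K}"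
proof (rule distr_uniform_count_measure_uniform_fibres)
  fix y assume y: "y \<in> {1..K}"
  have "cyclic_label K (snd p) (s (fst p)) = y \<longleftrightarrow> snd p = (y + K - Suc (s (fst p))) mod K"
    if p: "p \<in> J \<times> {..<K}" for p
  proof -
    obtain j r where "p = (j, r)" "j \<in> J" "r < K" using p by auto
    then show ?thesis
      using cyclic_label_eq_iff[OF s[OF \<open>j \<in> J\<close>] \<open>r < K\<close> y] cyclic_label_commute[of K r "s j"] by simp
  qed
  then have "{p \<in> J \<times> {..<K}. cyclic_label K (snd p) (s (fst p)) = y} =
      {p \<in> J \<times> {..<K}. snd p = (y + K - Suc (s (fst p))) mod K}"
    by (intro Collect_cong) blast
  also have "\<dots> = (\<lambda>j. (j, (y + K - Suc (s j)) mod K)) ` J"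
    using K by auto
  finally show "card {p \<in> J \<times> {..<K}. cyclic_label K (snd p) (s (fst p)) = y} * card {1..K} =
      card (J \<times> {..<K})"
    by (simp add: card_image inj_on_def card_cartesian_product)
qed (use assms cyclic_label_range in auto)

lemma card_cyclic_labellings:
  assumes J: "finite J" and inj: "inj_on \<beta> I" and \<beta>: "\<beta> ` I \<subseteq> J"
    and c: "\<And>i. i \<in> I \<Longrightarrow> c i < K" and y: "y \<in> Pi\<^sub>E I (\<lambda>_. {1..K})"
  shows "card {s \<in> Pi\<^sub>E J (\<lambda>_. {..<K}). \<forall>i\<in>I. cyclic_label K (c i) (s (\<beta> i)) = y i} * K ^ card I =
    K ^ card J"
proof -
  have "card I \<le> card J" using card_inj_on_le[OF inj \<beta> J] .
  have "{s \<in> Pi\<^sub>E J (\<lambda>_. {..<K}). \<forall>i\<in>I. cyclic_label K (c i) (s (\<beta> i)) = y i} =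
      {s \<in> Pi\<^sub>E J (\<lambda>_. {..<K}). \<forall>i\<in>I. s (\<beta> i) = (y i + K - Suc (c i)) mod K}"
    using y c \<beta> by (auto simp: PiE_iff cyclic_label_eq_iff image_subset_iff cong: ball_cong)
  also have "card \<dots> = K ^ (card J - card I)"
    using inj \<beta> J c
    by (subst card_PiE_prescribed_on_image) (auto intro!: mod_less_divisor intro: le_less_trans[OF le0 c])
  finally show ?thesis using \<open>card I \<le> card J\<close> by (simp flip: power_add)
qed

text \<open>Cut the space into \<open>m\<close> blocks of \<open>K\<close> cells of equal mass; the labelling indexed by
  \<open>s\<close> gives the cells of block \<open>\<beta>\<close> their labels cyclically shifted by \<open>s \<beta>\<close>.\<close>
lemma atomless_exists_cyclic_labellings:
  fixes LX :: "'x measure" and K m :: nat and I :: "'i set"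
  assumes LX: "prob_space LX" and at: "atomless LX" and K: "0 < K" and m: "0 < m"
  obtains b :: "'x \<Rightarrow> nat" and g :: "(nat \<Rightarrow> nat) \<Rightarrow> 'x \<Rightarrow> nat"
  where "b \<in> measurable LX (count_space {..<m})"
    and "distr LX (count_space {..<m}) b = uniform_count_measure {..<m}"
    and "\<And>s. g s \<in> measurable LX (count_space {1..K})"
    and "\<And>s. s \<in> Pi\<^sub>E {..<m} (\<lambda>_. {..<K}) \<Longrightarrow>
      distr LX (count_space {1..K}) (g s) = uniform_count_measure {1..K}"
    and "\<And>x y. (\<And>i. i \<in> I \<Longrightarrow> x i \<in> space LX) \<Longrightarrow> inj_on (\<lambda>i. b (x i)) I \<Longrightarrow>
      y \<in> Pi\<^sub>E I (\<lambda>_. {1..K}) \<Longrightarrow>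
      card {s \<in> Pi\<^sub>E {..<m} (\<lambda>_. {..<K}). \<forall>i\<in>I. g s (x i) = y i} * K ^ card I = K ^ m"
proof -
  define T where "T = {..<m} \<times> {..<K}"
  have T: "finite T" "T \<noteq> {}" using K m by (auto simp: T_def)
  obtain h where h: "h \<in> measurable LX (count_space T)"
      and h_uniform: "distr LX (count_space T) h = uniform_count_measure T"
    using atomless_exists_uniform_map[OF LX at T] by blast
  have h_T: "h x \<in> T" if "x \<in> space LX" for x
    using measurable_space[OF h that] by simp
  have distr_h: "distr LX (count_space Y) (\<lambda>x. f (h x)) = distr (uniform_count_measure T) (count_space Y) f"
    if "f ` T \<subseteq> Y" for f :: "nat \<times> nat \<Rightarrow> nat" and Y
    using h that unfolding h_uniform[symmetric]
    by (subst distr_distr) (auto simp: comp_def measurable_count_space_eq1)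
  define b where "b x = fst (h x)" for x
  define label where "label s = (\<lambda>p. cyclic_label K (snd p) (s (fst p)))" for s :: "nat \<Rightarrow> nat"
  define g where "g s x = label s (h x)" for s x
  have label_range: "label s ` T \<subseteq> {1..K}" for s
    using cyclic_label_range[OF K] by (auto simp: label_def)
  show ?thesis
  proof
    show "b \<in> measurable LX (count_space {..<m})"
      unfolding b_def using h
      by (rule measurable_compose) (auto simp: measurable_count_space_eq1 T_def)
    show "distr LX (count_space {..<m}) b = uniform_count_measure {..<m}"
      unfolding b_def using distr_uniform_count_measure_fst[of "{..<m}" "{..<K}"] K m
      by (subst distr_h) (auto simp: T_def)
    show "g s \<in> measurable LX (count_space {1..K})" for s
      unfolding g_def using h
      by (rule measurable_compose) (use label_range in \<open>auto simp: measurable_count_space_eq1\<close>)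
    show "distr LX (count_space {1..K}) (g s) = uniform_count_measure {1..K}"
      if "s \<in> Pi\<^sub>E {..<m} (\<lambda>_. {..<K})" for s
      unfolding g_def using that m K distr_uniform_count_measure_cyclic_label[of "{..<m}" K s]
      by (subst distr_h[OF label_range]) (auto simp: label_def T_def PiE_iff)
  next
    fix x y
    assume x: "\<And>i. i \<in> I \<Longrightarrow> x i \<in> space LX" and inj: "inj_on (\<lambda>i. b (x i)) I"
      and y: "y \<in> Pi\<^sub>E I (\<lambda>_. {1..K})"
    have "(\<lambda>i. b (x i)) ` I \<subseteq> {..<m}" "\<And>i. i \<in> I \<Longrightarrow> snd (h (x i)) < K"
      using h_T[OF x] by (auto simp: b_def T_def mem_Times_iff)
    from card_cyclic_labellings[OF _ inj this y]
    show "card {s \<in> Pi\<^sub>E {..<m} (\<lambda>_. {..<K}). \<forall>i\<in>I. g s (x i) = y i} * K ^ card I = K ^ m"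
      by (simp add: g_def label_def b_def)
  qed
qed

lemma PiM_pair_measure_eq_distr_zip:
  fixes M :: "'i \<Rightarrow> 'a measure" and N :: "'i \<Rightarrow> 'b measure"
  assumes I: "finite I" and M: "\<And>i. prob_space (M i)" and N: "\<And>i. prob_space (N i)"
  shows "PiM I (\<lambda>i. M i \<Otimes>\<^sub>M N i) =
    distr (PiM I M \<Otimes>\<^sub>M PiM I N) (PiM I (\<lambda>i. M i \<Otimes>\<^sub>M N i)) (\<lambda>p. \<lambda>i\<in>I. (fst p i, snd p i))"
    (is "?P = distr ?Q ?P ?zip")
proof -
  interpret PM: product_prob_space M I by (intro product_prob_spaceI M)
  interpret PN: product_prob_space N I by (intro product_prob_spaceI N)
  interpret PMN: product_prob_space "\<lambda>i. M i \<Otimes>\<^sub>M N i" I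
    using M N by (intro product_prob_spaceI prob_space_pair)
  have zip: "?zip \<in> measurable ?Q ?P"
  proof (rule measurable_restrict)
    fix i assume "i \<in> I"
    then show "(\<lambda>p. (fst p i, snd p i)) \<in> measurable ?Q (M i \<Otimes>\<^sub>M N i)" by measurable
  qed
  show ?thesis
  proof (rule PMN.PiM_eqI[OF I, symmetric])
    fix A assume A: "\<And>i. i \<in> I \<Longrightarrow> A i \<in> sets (M i \<Otimes>\<^sub>M N i)"
    have slice: "Pair x -` (?zip -` Pi\<^sub>E I A \<inter> space ?Q) = Pi\<^sub>E I (\<lambda>i. Pair (x i) -` A i)"
      if "x \<in> space (PiM I M)" for x
      using that sets.sets_into_space[OF A]
      by (fastforce simp: space_pair_measure space_PiM PiE_iff extensional_def)
    have "emeasure (distr ?Q ?P ?zip) (Pi\<^sub>E I A) = emeasure ?Q (?zip -` Pi\<^sub>E I A \<inter> space ?Q)"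
      using zip sets_PiM_I_finite[OF I A] by (rule emeasure_distr)
    also have "\<dots> = (\<integral>\<^sup>+x. emeasure (PiM I N) (Pair x -` (?zip -` Pi\<^sub>E I A \<inter> space ?Q)) \<partial>PiM I M)"
      using zip sets_PiM_I_finite[OF I A] by (intro PN.emeasure_pair_measure_alt measurable_sets)
    also have "\<dots> = (\<integral>\<^sup>+x. (\<Prod>i\<in>I. emeasure (N i) (Pair (x i) -` A i)) \<partial>PiM I M)"
    proof (intro nn_integral_cong)
      fix x assume "x \<in> space (PiM I M)"
      then show "emeasure (PiM I N) (Pair x -` (?zip -` Pi\<^sub>E I A \<inter> space ?Q)) =
          (\<Prod>i\<in>I. emeasure (N i) (Pair (x i) -` A i))"
        unfolding slice[OF \<open>x \<in> space (PiM I M)\<close>] using A I by (intro PN.emeasure_PiM sets_Pair1)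
    qed
    also have "\<dots> = (\<Prod>i\<in>I. \<integral>\<^sup>+x. emeasure (N i) (Pair x -` A i) \<partial>M i)"
      using A N by (intro PM.product_nn_integral_prod I sigma_finite_measure.measurable_emeasure_Pair
          prob_space_imp_sigma_finite)
    also have "\<dots> = (\<Prod>i\<in>I. emeasure (M i \<Otimes>\<^sub>M N i) (A i))"
      using A N by (intro prod.cong refl sigma_finite_measure.emeasure_pair_measure_alt[symmetric]
          prob_space_imp_sigma_finite) auto
    finally show "emeasure (distr ?Q ?P ?zip) (Pi\<^sub>E I A) = (\<Prod>i\<in>I. emeasure (M i \<Otimes>\<^sub>M N i) (A i))" .
  qed simp
qed

lemma measure_PiM_uniform_count_measure:
  assumes I: "finite I" and Y: "finite Y" "Y \<noteq> {}" and A: "A \<subseteq> Pi\<^sub>E I (\<lambda>_. Y)"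
  shows "measure (PiM I (\<lambda>_. uniform_count_measure Y)) A = card A / card Y ^ card I"
proof -
  interpret U: product_prob_space "\<lambda>_. uniform_count_measure Y" I
    using Y by (intro product_prob_spaceI prob_space_uniform_count_measure)
  have finA: "finite A" using A I Y by (meson finite_PiE finite_subset)
  have point: "{y} = Pi\<^sub>E I (\<lambda>i. {y i})" if "y \<in> A" for y
  proof -
    have "y \<in> Pi\<^sub>E I (\<lambda>_. Y)" using that A by blast
    then show ?thesis by (auto simp: PiE_iff extensional_def fun_eq_iff; metis)
  qed
  have point_sets: "{y} \<in> sets (PiM I (\<lambda>_. uniform_count_measure Y))" if "y \<in> A" for y
    using that A point[OF that] by (auto intro!: sets_PiM_I_finite I simp: PiE_iff)
  have "measure (PiM I (\<lambda>_. uniform_count_measure Y)) A =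
      (\<Sum>y\<in>A. measure (PiM I (\<lambda>_. uniform_count_measure Y)) {y})"
    using finA point_sets by (intro measure_eq_sum_singleton) auto
  also have "\<dots> = (\<Sum>y\<in>A. 1 / card Y ^ card I)"
  proof (intro sum.cong refl)
    fix y assume y: "y \<in> A"
    then have "{y} = prod_emb I (\<lambda>_. uniform_count_measure Y) I (Pi\<^sub>E I (\<lambda>i. {y i}))"
      using A point[OF y] by (subst prod_emb_PiE_same_index) (auto simp: PiE_iff space_uniform_count_measure)
    then have "measure (PiM I (\<lambda>_. uniform_count_measure Y)) {y} =
        (\<Prod>i\<in>I. measure (uniform_count_measure Y) {y i})"
      using y A I by (simp add: U.measure_PiM_emb PiE_iff subset_iff)
    also have "\<dots> = (\<Prod>i\<in>I. 1 / card Y)"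
      using y A Y by (intro prod.cong refl) (auto simp: measure_uniform_count_measure PiE_iff)
    also have "\<dots> = 1 / card Y ^ card I" by (simp add: power_one_over)
    finally show "measure (PiM I (\<lambda>_. uniform_count_measure Y)) {y} = 1 / card Y ^ card I" .
  qed
  finally show ?thesis by simp
qed

lemma measure_PiM_collision_le:
  fixes b :: "'a \<Rightarrow> nat"
  assumes M: "prob_space M" and I: "finite I"
    and b: "b \<in> measurable M (count_space {..<m})"
    and b_uniform: "distr M (count_space {..<m}) b = uniform_count_measure {..<m}"
  defines "D \<equiv> {x\<in>space (PiM I (\<lambda>_. M)). \<not> inj_on (\<lambda>i. b (x i)) I}"
  shows "D \<in> sets (PiM I (\<lambda>_. M))" and "measure (PiM I (\<lambda>_. M)) D \<le> card I ^ 2 / m"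
proof -
  interpret P: product_prob_space "\<lambda>_. M" I by (intro product_prob_spaceI M)
  define B where "B \<beta> = {x\<in>space M. b x = \<beta>}" for \<beta>
  have B_eq: "B \<beta> = b -` {\<beta>} \<inter> space M" for \<beta> by (auto simp: B_def)
  have B: "B \<beta> \<in> sets M" if "\<beta> < m" for \<beta>
    unfolding B_eq using that measurable_sets[OF b, of "{\<beta>}"] by simp
  have blocks: "measure M (B \<beta>) = 1 / m" if "\<beta> < m" for \<beta>
  proof -
    have "measure M (B \<beta>) = measure (distr M (count_space {..<m}) b) {\<beta>}"
      unfolding B_eq using that b by (simp add: measure_distr)
    also have "\<dots> = 1 / m" using that by (simp add: b_uniform measure_uniform_count_measure)
    finally show ?thesis .
  qed
  define OD where "OD = {p \<in> I \<times> I. fst p \<noteq> snd p}"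
  define E where "E p \<beta> = prod_emb I (\<lambda>_. M) {fst p, snd p} (Pi\<^sub>E {fst p, snd p} (\<lambda>_. B \<beta>))" for p \<beta>
  have E: "E p \<beta> \<in> sets (PiM I (\<lambda>_. M))" if "p \<in> OD" "\<beta> < m" for p \<beta>
    unfolding E_def using that B by (intro sets_PiM_I) (auto simp: OD_def)
  have D_eq: "D = (\<Union>p\<in>OD. \<Union>\<beta>\<in>{..<m}. E p \<beta>)"
  proof (intro equalityI subsetI)
    fix x assume "x \<in> D"
    then obtain i j where ij: "i \<in> I" "j \<in> I" "i \<noteq> j" "b (x i) = b (x j)" and x: "x \<in> space (PiM I (\<lambda>_. M))"
      unfolding D_def inj_on_def by blast
    then have "b (x i) < m" using measurable_space[OF b] by (auto simp: space_PiM)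
    moreover have "x \<in> E (i, j) (b (x i))"
      using x ij by (auto simp: E_def B_def prod_emb_iff space_PiM PiE_iff)
    ultimately show "x \<in> (\<Union>p\<in>OD. \<Union>\<beta>\<in>{..<m}. E p \<beta>)" using ij by (auto simp: OD_def)
  next
    fix x assume "x \<in> (\<Union>p\<in>OD. \<Union>\<beta>\<in>{..<m}. E p \<beta>)"
    then show "x \<in> D"
      by (auto simp: D_def OD_def E_def B_def prod_emb_iff space_PiM PiE_iff extensional_def inj_on_def)
  qed
  have finOD: "finite OD" using I unfolding OD_def by auto
  show "D \<in> sets (PiM I (\<lambda>_. M))"
    unfolding D_eq using finOD E by (intro sets.finite_UN) auto
  have "measure (PiM I (\<lambda>_. M)) D \<le> (\<Sum>p\<in>OD. \<Sum>\<beta>\<in>{..<m}. measure (PiM I (\<lambda>_. M)) (E p \<beta>))"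
    unfolding D_eq using finOD E
    by (intro order.trans[OF measure_UNION_le] sum_mono measure_UNION_le) auto
  also have "\<dots> = (\<Sum>p\<in>OD. \<Sum>\<beta>\<in>{..<m}. (1 / m) ^ 2)"
  proof (intro sum.cong refl)
    fix p \<beta> assume "p \<in> OD" "\<beta> \<in> {..<m}"
    then show "measure (PiM I (\<lambda>_. M)) (E p \<beta>) = (1 / m) ^ 2"
      unfolding E_def using B blocks
      by (subst P.measure_PiM_emb) (auto simp: OD_def power2_eq_square)
  qed
  also have "\<dots> = card OD / m" by (simp add: power2_eq_square)
  also have "\<dots> \<le> card I ^ 2 / m"
  proof -
    have "card OD \<le> card (I \<times> I)" using I unfolding OD_def by (intro card_mono) auto
    then show ?thesis
      by (intro divide_right_mono) (simp_all add: card_cartesian_product power2_eq_square flip: of_nat_mult)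
  qed
  finally show "measure (PiM I (\<lambda>_. M)) D \<le> card I ^ 2 / m" .
qed

lemma emeasure_PiM_pair_uniform_count_measure:
  fixes M :: "'a measure" and Y :: "'b set" and I :: "'i set"
  assumes M: "prob_space M" and Y: "finite Y" "Y \<noteq> {}" and I: "finite I"
    and F: "F \<in> sets (PiM I (\<lambda>_. M \<Otimes>\<^sub>M uniform_count_measure Y))"
  shows "emeasure (PiM I (\<lambda>_. M \<Otimes>\<^sub>M uniform_count_measure Y)) F =
    (\<integral>\<^sup>+x. emeasure (PiM I (\<lambda>_. uniform_count_measure Y)) {y\<in>Pi\<^sub>E I (\<lambda>_. Y). (\<lambda>i\<in>I. (x i, y i)) \<in> F}
      \<partial>PiM I (\<lambda>_. M))"
proof -
  let ?MI = "PiM I (\<lambda>_. M)" and ?UI = "PiM I (\<lambda>_. uniform_count_measure Y)"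
  let ?P = "PiM I (\<lambda>_. M \<Otimes>\<^sub>M uniform_count_measure Y)" and ?zip = "\<lambda>p. \<lambda>i\<in>I. (fst p i, snd p i)"
  have U: "prob_space (uniform_count_measure Y)" using Y by (rule prob_space_uniform_count_measure)
  interpret UI: product_prob_space "\<lambda>_. uniform_count_measure Y" I using U by (intro product_prob_spaceI)
  have P_zip: "?P = distr (?MI \<Otimes>\<^sub>M ?UI) ?P ?zip"
    using PiM_pair_measure_eq_distr_zip[OF I, of "\<lambda>_. M" "\<lambda>_. uniform_count_measure Y"] M U by simp
  have zip: "?zip \<in> measurable (?MI \<Otimes>\<^sub>M ?UI) ?P"
    by (intro measurable_restrict) measurable
  have "emeasure ?P F = emeasure (?MI \<Otimes>\<^sub>M ?UI) (?zip -` F \<inter> space (?MI \<Otimes>\<^sub>M ?UI))"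
    using F by (subst P_zip) (simp add: emeasure_distr zip)
  also have "\<dots> = (\<integral>\<^sup>+x. emeasure ?UI (Pair x -` (?zip -` F \<inter> space (?MI \<Otimes>\<^sub>M ?UI))) \<partial>?MI)"
    using measurable_sets[OF zip F] by (rule UI.emeasure_pair_measure_alt)
  also have "\<dots> = (\<integral>\<^sup>+x. emeasure ?UI {y\<in>Pi\<^sub>E I (\<lambda>_. Y). (\<lambda>i\<in>I. (x i, y i)) \<in> F} \<partial>?MI)"
    by (intro nn_integral_cong arg_cong[where f = "emeasure ?UI"])
      (auto simp: space_pair_measure space_PiM space_uniform_count_measure)
  finally show ?thesis .
qed

lemma measure_PiM_distr_graph:
  fixes M :: "'a measure" and Y :: "'b set" and I :: "'i set"
  assumes M: "prob_space M" and Y: "finite Y" "Y \<noteq> {}" and I: "finite I"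
    and g: "g \<in> measurable M (count_space Y)"
    and F: "F \<in> sets (PiM I (\<lambda>_. M \<Otimes>\<^sub>M count_space Y))"
  shows "measure (PiM I (\<lambda>_. distr M (M \<Otimes>\<^sub>M count_space Y) (\<lambda>x. (x, g x)))) F =
    measure (PiM I (\<lambda>_. M)) {x\<in>space (PiM I (\<lambda>_. M)). (\<lambda>i\<in>I. (x i, g (x i))) \<in> F}"
proof -
  let ?MY = "M \<Otimes>\<^sub>M uniform_count_measure Y"
  have U: "prob_space (uniform_count_measure Y)" using Y by (rule prob_space_uniform_count_measure)
  have sets_MY: "sets ?MY = sets (M \<Otimes>\<^sub>M count_space Y)"
    by (intro sets_pair_measure_cong refl sets_uniform_count_measure_count_space)
  have sets_P: "sets (PiM I (\<lambda>_. ?MY)) = sets (PiM I (\<lambda>_. M \<Otimes>\<^sub>M count_space Y))"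
    by (intro sets_PiM_cong refl sets_MY)
  have graph: "(\<lambda>x. (x, g x)) \<in> measurable M ?MY"
    unfolding measurable_cong_sets[OF refl sets_MY] using g by measurable
  have "PiM I (\<lambda>_. distr M (M \<Otimes>\<^sub>M count_space Y) (\<lambda>x. (x, g x))) = PiM I (\<lambda>_. distr M ?MY (\<lambda>x. (x, g x)))"
    by (intro PiM_cong refl distr_cong) (simp add: sets_MY)
  also have "\<dots> = distr (PiM I (\<lambda>_. M)) (PiM I (\<lambda>_. ?MY)) (compose I (\<lambda>x. (x, g x)))"
    using M U graph prob_space_pair[OF M U] by (simp add: distr_PiM_finite_prob_space'[OF I])
  moreover have "compose I (\<lambda>x. (x, g x)) \<in> measurable (PiM I (\<lambda>_. M)) (PiM I (\<lambda>_. ?MY))"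
    unfolding compose_def
  proof (rule measurable_restrict)
    fix i assume "i \<in> I"
    from measurable_compose[OF measurable_component_singleton[OF this, of "\<lambda>_. M"] graph]
    show "(\<lambda>x. (x i, g (x i))) \<in> measurable (PiM I (\<lambda>_. M)) ?MY" .
  qed
  ultimately show ?thesis
    using F unfolding sets_P[symmetric]
    by (simp add: measure_distr compose_def vimage_def Int_def conj_commute)
qed

lemma card_filter_labellings:
  assumes S: "finite S" and Y: "finite Y" and I: "finite I"
    and range: "\<And>s i. s \<in> S \<Longrightarrow> i \<in> I \<Longrightarrow> l s i \<in> Y"
    and fibres: "\<And>y. y \<in> Pi\<^sub>E I (\<lambda>_. Y) \<Longrightarrow> card {s\<in>S. \<forall>i\<in>I. l s i = y i} * card Y ^ card I = card S"
  shows "card {s\<in>S. P (\<lambda>i\<in>I. l s i)} * card Y ^ card I = card {y\<in>Pi\<^sub>E I (\<lambda>_. Y). P y} * card S"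
proof -
  have "card {s\<in>S. (\<lambda>i\<in>I. l s i) = y} = card {s\<in>S. \<forall>i\<in>I. l s i = y i}"
    if "y \<in> Pi\<^sub>E I (\<lambda>_. Y)" for y
    using that by (intro arg_cong[where f = card]) (auto simp: PiE_iff extensional_def fun_eq_iff)
  then show ?thesis
    using card_filter_uniform_fibres[OF S finite_PiE[OF I Y], of "\<lambda>s. \<lambda>i\<in>I. l s i"] range fibres
    by (simp add: card_PiE[OF I] image_subset_iff)
qed

lemma measure_PiM_uniform_labels_le_average:
  fixes M :: "'a measure" and Y :: "'b set" and g :: "'s \<Rightarrow> 'a \<Rightarrow> 'b" and I :: "'i set"
  assumes M: "prob_space M" and Y: "finite Y" "Y \<noteq> {}" and I: "finite I" and S: "finite S" "S \<noteq> {}"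
    and g: "\<And>s. s \<in> S \<Longrightarrow> g s \<in> measurable M (count_space Y)"
    and D: "D \<in> sets (PiM I (\<lambda>_. M))"
    and fibres: "\<And>x y. x \<in> space (PiM I (\<lambda>_. M)) - D \<Longrightarrow> y \<in> Pi\<^sub>E I (\<lambda>_. Y) \<Longrightarrow>
      card {s\<in>S. \<forall>i\<in>I. g s (x i) = y i} * card Y ^ card I = card S"
    and F: "F \<in> sets (PiM I (\<lambda>_. M \<Otimes>\<^sub>M count_space Y))"
  shows "measure (PiM I (\<lambda>_. M \<Otimes>\<^sub>M uniform_count_measure Y)) F \<le>
    (\<Sum>s\<in>S. measure (PiM I (\<lambda>_. distr M (M \<Otimes>\<^sub>M count_space Y) (\<lambda>x. (x, g s x)))) F) / card S
      + measure (PiM I (\<lambda>_. M)) D"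
proof -
  define MI where "MI = PiM I (\<lambda>_. M)"
  define UI where "UI = PiM I (\<lambda>_. uniform_count_measure Y)"
  define P where "P = PiM I (\<lambda>_. M \<Otimes>\<^sub>M uniform_count_measure Y)"
  define E where "E s = {x\<in>space MI. (\<lambda>i\<in>I. (x i, g s (x i))) \<in> F}" for s
  define slice where "slice x = {y\<in>Pi\<^sub>E I (\<lambda>_. Y). (\<lambda>i\<in>I. (x i, y i)) \<in> F}" for x
  define r where "r x = (\<Sum>s\<in>S. indicator (E s) x) / card S + indicator D x" for x
  have U: "prob_space (uniform_count_measure Y)" using Y by (rule prob_space_uniform_count_measure)
  interpret UI: product_prob_space "\<lambda>_. uniform_count_measure Y" I using U by (intro product_prob_spaceI)
  interpret MI: prob_space MI unfolding MI_def using M by (rule prob_space_PiM)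
  interpret P: prob_space P unfolding P_def using M U by (intro prob_space_PiM prob_space_pair)
  have sets_P: "sets P = sets (PiM I (\<lambda>_. M \<Otimes>\<^sub>M count_space Y))" unfolding P_def
    by (intro sets_PiM_cong refl sets_pair_measure_cong sets_uniform_count_measure_count_space)
  have E: "E s \<in> sets MI" if "s \<in> S" for s
  proof -
    have "(\<lambda>x. \<lambda>i\<in>I. (x i, g s (x i))) \<in> measurable MI (PiM I (\<lambda>_. M \<Otimes>\<^sub>M count_space Y))"
      using g[OF that] unfolding MI_def by measurable
    from measurable_sets[OF this F] show ?thesis by (simp add: E_def vimage_def Int_def conj_commute)
  qed
  have D_MI: "D \<in> sets MI" using D by (simp add: MI_def)
  have pointwise: "emeasure UI (slice x) \<le> ennreal (r x)" if x: "x \<in> space MI" for x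
  proof (cases "x \<in> D")
    case True
    have "emeasure UI (slice x) \<le> 1" unfolding UI_def by (rule UI.emeasure_le_1)
    also have "1 \<le> ennreal (r x)" using True by (simp add: r_def sum_nonneg)
    finally show ?thesis .
  next
    case False
    have "g s (x i) \<in> Y" if "s \<in> S" "i \<in> I" for s i
      using measurable_space[OF g] x that by (auto simp: MI_def space_PiM PiE_iff)
    moreover have "x \<in> space (PiM I (\<lambda>_. M)) - D" using x False by (simp add: MI_def)
    ultimately have "card {s\<in>S. P (\<lambda>i\<in>I. g s (x i))} * card Y ^ card I = card {y\<in>Pi\<^sub>E I (\<lambda>_. Y). P y} * card S"
      for P using card_filter_labellings[OF S(1) Y(1) I _ fibres] by blast
    from this[of "\<lambda>y. (\<lambda>i\<in>I. (x i, y i)) \<in> F"]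
    have count: "card {s\<in>S. x \<in> E s} * card Y ^ card I = card (slice x) * card S"
      using x by (simp add: E_def slice_def MI_def cong: restrict_cong)
    have "r x = card {s\<in>S. x \<in> E s} / card S"
      using False S by (simp add: r_def indicator_def Int_def conj_commute)
    also have "\<dots> = card (slice x) / card Y ^ card I"
      using count S Y by (simp add: field_simps card_gt_0_iff flip: of_nat_mult of_nat_power)
    also have "\<dots> = measure UI (slice x)"
      unfolding UI_def using I Y by (subst measure_PiM_uniform_count_measure) (auto simp: slice_def)
    finally show ?thesis by (simp add: UI_def UI.emeasure_eq_measure)
  qed
  have indicator_integrable: "integrable MI (indicator A :: _ \<Rightarrow> real)" if "A \<in> sets MI" for A
    using that MI.emeasure_finite[of A] by (simp add: less_top[symmetric])
  have "integrable MI (\<lambda>x. \<Sum>s\<in>S. indicator (E s) x :: real)"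
    by (rule Bochner_Integration.integrable_sum) (rule indicator_integrable[OF E])
  then have r_integrable: "integrable MI r"
    unfolding r_def by (intro Bochner_Integration.integrable_add integrable_divide_zero indicator_integrable D_MI)
  have "emeasure P F = (\<integral>\<^sup>+x. emeasure UI (slice x) \<partial>MI)"
    using emeasure_PiM_pair_uniform_count_measure[OF M Y I, of F] F sets_P
    by (simp add: P_def MI_def UI_def slice_def)
  also have "\<dots> \<le> (\<integral>\<^sup>+x. ennreal (r x) \<partial>MI)"
    by (intro nn_integral_mono pointwise)
  also have "\<dots> = ennreal (integral\<^sup>L MI r)"
    by (intro nn_integral_eq_integral[OF r_integrable] AE_I2) (simp add: r_def sum_nonneg)
  also have "integral\<^sup>L MI r = (\<Sum>s\<in>S. measure MI (E s)) / card S + measure MI D"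
    unfolding r_def using E D_MI indicator_integrable
    by (simp add: Bochner_Integration.integral_sum Int_absorb2 sets.sets_into_space integrable_divide_zero)
  finally have "measure P F \<le> (\<Sum>s\<in>S. measure MI (E s)) / card S + measure MI D"
    by (simp add: P.emeasure_eq_measure sum_nonneg del: ennreal_plus)
  then show ?thesis
    using measure_PiM_distr_graph[OF M Y I g F] by (simp add: P_def MI_def E_def)
qed

lemma measure_PiM_independent_labels_le:
  fixes LX :: "'x measure" and K :: nat and I :: "'i set"
  assumes LX: "prob_space LX" and at: "atomless LX" and K: "0 < K" and I: "finite I"
    and F: "F \<in> sets (PiM I (\<lambda>_. LX \<Otimes>\<^sub>M count_space {1..K}))"
    and deterministic: "\<And>g. g \<in> measurable LX (count_space {1..K}) \<Longrightarrow>
      distr LX (count_space {1..K}) g = uniform_count_measure {1..K} \<Longrightarrow>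
      measure (PiM I (\<lambda>_. distr LX (LX \<Otimes>\<^sub>M count_space {1..K}) (\<lambda>x. (x, g x)))) F \<le> \<alpha>"
  shows "measure (PiM I (\<lambda>_. LX \<Otimes>\<^sub>M uniform_count_measure {1..K})) F \<le> \<alpha>"
proof -
  let ?P = "PiM I (\<lambda>_. LX \<Otimes>\<^sub>M uniform_count_measure {1..K})"
  let ?MI = "PiM I (\<lambda>_. LX)"
  have bound: "measure ?P F \<le> \<alpha> + card I ^ 2 / m" if m: "0 < m" for m :: nat
  proof -
    let ?S = "Pi\<^sub>E {..<m} (\<lambda>_::nat. {..<K})"
    obtain b g where b: "b \<in> measurable LX (count_space {..<m})"
      and b_uniform: "distr LX (count_space {..<m}) b = uniform_count_measure {..<m}"
      and g: "\<And>s. g s \<in> measurable LX (count_space {1..K})"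
      and g_uniform: "\<And>s. s \<in> ?S \<Longrightarrow> distr LX (count_space {1..K}) (g s) = uniform_count_measure {1..K}"
      and fibres: "\<And>x y. (\<And>i. i \<in> I \<Longrightarrow> x i \<in> space LX) \<Longrightarrow>
        inj_on (\<lambda>i. b (x i)) I \<Longrightarrow> y \<in> Pi\<^sub>E I (\<lambda>_. {1..K}) \<Longrightarrow>
        card {s \<in> ?S. \<forall>i\<in>I. g s (x i) = y i} * K ^ card I = K ^ m"
      using atomless_exists_cyclic_labellings[OF LX at K m, where I = I] by blast
    define D where "D = {x\<in>space ?MI. \<not> inj_on (\<lambda>i. b (x i)) I}"
    note collision = measure_PiM_collision_le[OF LX I b b_uniform, folded D_def]
    have card_S: "card ?S = K ^ m" by (simp add: card_PiE)
    have "measure ?P F \<le>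
        (\<Sum>s\<in>?S. measure (PiM I (\<lambda>_. distr LX (LX \<Otimes>\<^sub>M count_space {1..K}) (\<lambda>x. (x, g s x)))) F) / card ?S
        + measure ?MI D"
    proof (rule measure_PiM_uniform_labels_le_average[OF LX _ _ I _ _ g collision(1) _ F])
      fix x y assume x: "x \<in> space ?MI - D" and y: "y \<in> Pi\<^sub>E I (\<lambda>_. {1..K})"
      then show "card {s\<in>?S. \<forall>i\<in>I. g s (x i) = y i} * card {1..K} ^ card I = card ?S"
        using fibres[of x y] card_S by (auto simp: D_def space_PiM)
    qed (use K in \<open>auto simp: PiE_eq_empty_iff finite_PiE\<close>)
    also have "\<dots> \<le> (\<Sum>s\<in>?S. \<alpha>) / card ?S + card I ^ 2 / m"
      using deterministic[OF g g_uniform] collision(2)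
      by (intro add_mono divide_right_mono sum_mono) auto
    also have "(\<Sum>s\<in>?S. \<alpha>) / card ?S = \<alpha>"
      using K card_S by simp
    finally show ?thesis .
  qed
  have "(\<lambda>m. \<alpha> + card I ^ 2 / real m) \<longlonglongrightarrow> \<alpha>"
    using tendsto_add[OF tendsto_const lim_const_over_n] by simp
  then show ?thesis
    by (rule LIMSEQ_le_const) (use bound in \<open>auto intro!: exI[of _ 1]\<close>)
qed

lemma measure_PiM_independent_labels_ge:
  fixes LX :: "'x measure" and K :: nat and I :: "'i set" and C :: "('i \<Rightarrow> 'x \<times> nat) \<Rightarrow> real"
  assumes LX: "prob_space LX" and at: "atomless LX" and K: "0 < K" and I: "finite I"
    and C: "C \<in> borel_measurable (PiM I (\<lambda>_. LX \<Otimes>\<^sub>M count_space {1..K}))"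
    and deterministic: "\<And>g. g \<in> measurable LX (count_space {1..K}) \<Longrightarrow>
      distr LX (count_space {1..K}) g = uniform_count_measure {1..K} \<Longrightarrow>
      1 - \<alpha> \<le> measure (PiM I (\<lambda>_. distr LX (LX \<Otimes>\<^sub>M count_space {1..K}) (\<lambda>x. (x, g x))))
        {\<omega> \<in> space (PiM I (\<lambda>_. distr LX (LX \<Otimes>\<^sub>M count_space {1..K}) (\<lambda>x. (x, g x)))). c \<le> C \<omega>}"
  shows "1 - \<alpha> \<le> measure (PiM I (\<lambda>_. LX \<Otimes>\<^sub>M uniform_count_measure {1..K}))
    {\<omega> \<in> space (PiM I (\<lambda>_. LX \<Otimes>\<^sub>M uniform_count_measure {1..K})). c \<le> C \<omega>}"
proof -
  let ?Q = "PiM I (\<lambda>_. LX \<Otimes>\<^sub>M count_space {1..K})"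
  define F where "F = {\<omega> \<in> space ?Q. C \<omega> < c}"
  have F: "F \<in> sets ?Q" unfolding F_def using C by measurable
  have compl: "measure N {\<omega> \<in> space N. c \<le> C \<omega>} = 1 - measure N F"
    if "prob_space N" "sets N = sets ?Q" for N
  proof -
    have "{\<omega> \<in> space N. c \<le> C \<omega>} = space N - F"
      using sets_eq_imp_space_eq[OF that(2)] by (auto simp: F_def)
    then show ?thesis using F that by (simp add: prob_space.prob_compl)
  qed
  have "measure (PiM I (\<lambda>_. LX \<Otimes>\<^sub>M uniform_count_measure {1..K})) F \<le> \<alpha>"
  proof (rule measure_PiM_independent_labels_le[OF LX at K I F])
    fix g assume g: "g \<in> measurable LX (count_space {1..K})"
      and g_uniform: "distr LX (count_space {1..K}) g = uniform_count_measure {1..K}"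
    let ?L = "distr LX (LX \<Otimes>\<^sub>M count_space {1..K}) (\<lambda>x. (x, g x))"
    have "prob_space (PiM I (\<lambda>_. ?L))"
      using g by (intro prob_space_PiM prob_space.prob_space_distr[OF LX]) measurable
    moreover have "sets (PiM I (\<lambda>_. ?L)) = sets ?Q" by (intro sets_PiM_cong refl) (simp only: sets_distr)
    ultimately show "measure (PiM I (\<lambda>_. ?L)) F \<le> \<alpha>"
      using deterministic[OF g g_uniform] compl by simp
  qed
  moreover have "prob_space (PiM I (\<lambda>_. LX \<Otimes>\<^sub>M uniform_count_measure {1..K}))"
    using LX K by (intro prob_space_PiM prob_space_pair prob_space_uniform_count_measure) auto
  moreover have "sets (PiM I (\<lambda>_. LX \<Otimes>\<^sub>M uniform_count_measure {1..K})) = sets ?Q"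
    by (intro sets_PiM_cong refl sets_pair_measure_cong sets_uniform_count_measure_count_space)
  ultimately show ?thesis using compl by simp
qed

lemma graph_law:
  fixes LX :: "'x measure" and g :: "'x \<Rightarrow> nat"
  assumes LX: "prob_space LX" and g: "g \<in> measurable LX (count_space {1..K})"
  defines "L \<equiv> distr LX (obs_space LX K) (\<lambda>x. (x, g x))"
  shows "prob_space L" and "sets L = sets (obs_space LX K)" and "distr L LX fst = LX"
    and "distr L (count_space {1..K}) snd = distr LX (count_space {1..K}) g"
proof -
  have graph: "(\<lambda>x. (x, g x)) \<in> measurable LX (obs_space LX K)"
    unfolding obs_space_def using g by measurable
  show "prob_space L" unfolding L_def using graph by (rule prob_space.prob_space_distr[OF LX])
  show "sets L = sets (obs_space LX K)" unfolding L_def by simp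
  show "distr L LX fst = LX"
    unfolding L_def using graph by (subst distr_distr) (auto simp: obs_space_def comp_def distr_id)
  show "distr L (count_space {1..K}) snd = distr LX (count_space {1..K}) g"
    unfolding L_def using graph by (subst distr_distr) (auto simp: obs_space_def comp_def)
qed

lemma cond_prob_Y_graph_law:
  fixes LX :: "'x measure" and g :: "'x \<Rightarrow> nat"
  assumes LX: "prob_space LX" and g: "g \<in> measurable LX (count_space {1..K})"
  defines "L \<equiv> distr LX (obs_space LX K) (\<lambda>x. (x, g x))"
  shows "AE z in L. cond_prob_Y LX L k z = (if snd z = k then 1 else 0)"
proof -
  interpret L: prob_space L unfolding L_def using graph_law(1)[OF LX g] .
  have sets_L: "sets L = sets (obs_space LX K)" unfolding L_def by simp
  define \<F> where "\<F> = vimage_algebra (space L) fst LX"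
  have fst: "fst \<in> measurable L LX"
    unfolding measurable_cong_sets[OF sets_L refl] obs_space_def by measurable
  have subalg: "subalgebra L \<F>"
    unfolding subalgebra_def \<F>_def using sets_image_in_sets[OF refl fst] by simp
  interpret \<F>: finite_measure_subalgebra L \<F>
    by (intro finite_measure_subalgebra.intro finite_measure_subalgebra_axioms.intro
        L.finite_measure_axioms subalg)
  define Y_is_k where "Y_is_k z = (if snd z = k then 1 else (0::real))" for z :: "'x \<times> nat"
  define gX_is_k where "gX_is_k z = (if g (fst z) = k then 1 else (0::real))" for z :: "'x \<times> nat"
  have "AE z in L. snd z = g (fst z)"
  proof -
    have "{z \<in> space (obs_space LX K). snd z = g (fst z)} =
        (\<Union>j\<in>{1..K}. (g -` {j} \<inter> space LX) \<times> {j})"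
      using measurable_space[OF g] by (auto simp: obs_space_def space_pair_measure)
    also have "\<dots> \<in> sets (obs_space LX K)"
      unfolding obs_space_def using g by (intro sets.finite_UN pair_measureI) (auto simp: measurable_sets)
    finally show ?thesis
      unfolding L_def using g by (subst AE_distr_iff) (auto simp: obs_space_def)
  qed
  then have Y_eq: "AE z in L. Y_is_k z = gX_is_k z"
    by eventually_elim (simp add: Y_is_k_def gX_is_k_def)
  have Y_meas: "Y_is_k \<in> borel_measurable L"
    unfolding Y_is_k_def measurable_cong_sets[OF sets_L refl] obs_space_def by measurable
  have gX_meas_F: "gX_is_k \<in> borel_measurable \<F>"
  proof -
    have "fst \<in> measurable \<F> LX"
      unfolding \<F>_def using measurable_space[OF fst] by (intro measurable_vimage_algebra1) auto
    moreover have "(\<lambda>x. if g x = k then 1 else (0::real)) \<in> borel_measurable LX" using g by measurable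
    ultimately show ?thesis
      unfolding gX_is_k_def by (rule measurable_compose)
  qed
  have gX_meas: "gX_is_k \<in> borel_measurable L" by (rule measurable_from_subalg[OF subalg gX_meas_F])
  have "integrable L gX_is_k"
    using gX_meas by (intro L.integrable_const_bound[of _ 1]) (auto simp: gX_is_k_def)
  then have "AE z in L. real_cond_exp L \<F> gX_is_k z = gX_is_k z"
    by (rule \<F>.real_cond_exp_F_meas[OF _ gX_meas_F])
  moreover have "AE z in L. real_cond_exp L \<F> Y_is_k z = real_cond_exp L \<F> gX_is_k z"
    by (rule \<F>.real_cond_exp_cong[OF Y_eq Y_meas gX_meas])
  ultimately have "AE z in L. real_cond_exp L \<F> Y_is_k z = Y_is_k z"
    using Y_eq by eventually_elim auto
  then show ?thesis unfolding cond_prob_Y_def \<F>_def Y_is_k_def by simp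
qed

lemma sum_abs_indicator_minus_uniform:
  assumes j: "j \<in> {1..K}"
  shows "(\<Sum>k\<in>{1..K}. \<bar>(if j = k then 1 else 0) - 1 / real K\<bar>) = 2 * (1 - 1 / K)"
proof -
  have K: "1 \<le> real K" using j by simp
  have "(\<Sum>k\<in>{1..K}. \<bar>(if j = k then 1 else 0) - 1 / real K\<bar>) =
      \<bar>1 - 1 / real K\<bar> + (\<Sum>k\<in>{1..K} - {j}. \<bar>0 - 1 / real K\<bar>)"
    using j by (subst sum.remove[of _ j]) (auto intro!: sum.cong)
  also have "\<dots> = (1 - 1 / K) + (K - 1) / K"
    using j K by (simp add: of_nat_diff)
  also have "\<dots> = 2 * (1 - 1 / K)"
    using K by (simp add: field_simps)
  finally show ?thesis .
qed

lemma ETV_graph_law: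
  fixes LX :: "'x measure" and g :: "'x \<Rightarrow> nat"
  assumes LX: "prob_space LX" and K: "2 \<le> K" and g: "g \<in> measurable LX (count_space {1..K})"
    and g_uniform: "distr LX (count_space {1..K}) g = uniform_count_measure {1..K}"
  shows "ETV LX K (distr LX (obs_space LX K) (\<lambda>x. (x, g x))) = 1"
proof -
  define L where "L = distr LX (obs_space LX K) (\<lambda>x. (x, g x))"
  note law = graph_law[OF LX g, folded L_def]
  interpret L: prob_space L by (fact law(1))
  have snd: "snd \<in> measurable L (count_space {1..K})"
    unfolding measurable_cong_sets[OF law(2) refl] obs_space_def by measurable
  have Y_uniform: "measure L {w \<in> space L. snd w = k} = 1 / K" if "k \<in> {1..K}" for k
  proof -
    have "measure L {w \<in> space L. snd w = k} = measure (distr L (count_space {1..K}) snd) {k}"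
      using snd that by (subst measure_distr) (auto simp: vimage_def Int_def conj_commute)
    then show ?thesis using that unfolding law(4) g_uniform by (simp add: measure_uniform_count_measure)
  qed
  define tv where "tv z = (1/2) * (\<Sum>k\<in>{1..K}. \<bar>cond_prob_Y LX L k z - measure L {w \<in> space L. snd w = k}\<bar>)"
    for z
  have "AE z in L. \<forall>k\<in>{1..K}. cond_prob_Y LX L k z = (if snd z = k then 1 else 0)"
    unfolding L_def by (intro AE_finite_allI cond_prob_Y_graph_law[OF LX g]) auto
  then have "AE z in L. tv z = 1 - 1 / K"
  proof (rule AE_mp, intro AE_I2 impI)
    fix z assume z: "z \<in> space L" and cond: "\<forall>k\<in>{1..K}. cond_prob_Y LX L k z = (if snd z = k then 1 else 0)"
    have "tv z = (1/2) * (\<Sum>k\<in>{1..K}. \<bar>(if snd z = k then 1 else 0) - 1 / real K\<bar>)"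
      unfolding tv_def using cond Y_uniform by (intro arg_cong[where f = "(*) (1/2)"] sum.cong) auto
    moreover have "snd z \<in> {1..K}" using measurable_space[OF snd z] by simp
    ultimately show "tv z = 1 - 1 / K"
      using sum_abs_indicator_minus_uniform[of "snd z" K] by simp
  qed
  moreover have "tv \<in> borel_measurable L"
    unfolding tv_def cond_prob_Y_def
    by (intro borel_measurable_times borel_measurable_const borel_measurable_sum borel_measurable_abs
        borel_measurable_diff borel_measurable_cond_exp2)
  ultimately have "integral\<^sup>L L tv = integral\<^sup>L L (\<lambda>_. 1 - 1 / K)"
    by (intro integral_cong_AE) auto
  then have integral_tv: "integral\<^sup>L L tv = 1 - 1 / K" by (simp add: L.prob_space)
  have "ETV LX K L = (1 / (1 - 1 / K)) * integral\<^sup>L L tv"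
    unfolding ETV_def tv_def ..
  also have "\<dots> = 1"
  proof -
    have "1 / real K < 1" using K by simp
    then show ?thesis unfolding integral_tv using K by simp
  qed
  finally show ?thesis unfolding L_def .
qed

theorem theorem3:
  fixes K n :: nat and \<alpha> :: real
    and LX :: "'x measure"
    and C :: "(nat \<Rightarrow> 'x \<times> nat) \<Rightarrow> real"
  assumes K: "K \<ge> 2" and n: "n \<ge> 1" and alpha: "0 < \<alpha>" "\<alpha> < 1"
    and LX_prob: "prob_space LX" and LX_atomless: "atomless LX"
    and C_meas: "C \<in> borel_measurable (PiM {..<n} (\<lambda>_. obs_space LX K))"
    and valid: "\<And>L. prob_space L \<Longrightarrow> sets L = sets (obs_space LX K) \<Longrightarrow>
                   distr L LX fst = LX \<Longrightarrow>
                   distr L (count_space {1..K}) snd = uniform_count_measure {1..K} \<Longrightarrow>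
                   measure (PiM {..<n} (\<lambda>_. L))
                     {\<omega> \<in> space (PiM {..<n} (\<lambda>_. L)). C \<omega> \<ge> ETV LX K L} \<ge> 1 - \<alpha>"
  shows "measure (PiM {..<n} (\<lambda>_. LX \<Otimes>\<^sub>M uniform_count_measure {1..K}))
           {\<omega> \<in> space (PiM {..<n} (\<lambda>_. LX \<Otimes>\<^sub>M uniform_count_measure {1..K})). C \<omega> \<ge> 1}
         \<ge> 1 - \<alpha>"
proof (rule measure_PiM_independent_labels_ge[OF LX_prob LX_atomless _ _ C_meas[unfolded obs_space_def]])
  fix g assume g: "g \<in> measurable LX (count_space {1..K})"
    and g_uniform: "distr LX (count_space {1..K}) g = uniform_count_measure {1..K}"
  note law = graph_law[OF LX_prob g]
  from valid[OF law(1-3) law(4)[unfolded g_uniform]] ETV_graph_law[OF LX_prob K g g_uniform]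
  show "1 - \<alpha> \<le> measure (PiM {..<n} (\<lambda>_. distr LX (LX \<Otimes>\<^sub>M count_space {1..K}) (\<lambda>x. (x, g x))))
      {\<omega> \<in> space (PiM {..<n} (\<lambda>_. distr LX (LX \<Otimes>\<^sub>M count_space {1..K}) (\<lambda>x. (x, g x)))). 1 \<le> C \<omega>}"
    by (simp add: obs_space_def)
qed (use K in auto)

end
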